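(* Let $A\in\mathbb{R}^{m\times n}$, $y\in\mathbb{R}^m$, $\lambda>0$, and let $x^\star$ be a global minimizer of $$\min_{x\in\mathbb{R}^n}\ \frac{1}{2\lambda}\|Ax-y\|^2+\|Lx\|_{1,2}.$$ Let $\beta^\star=-\frac{1}{\lambda}A^\top(Ax^\star-y)$, let $\widehat{L}=L-P_{T_z}LP_{T_x^\perp}$ be the effective lifting operator associated with $x^\star$, let $\widehat{u}_{\min}=\widehat{L}(\widehat{L}^\top\widehat{L})^{-1}\beta^\star$, and define the OGN certificate $u^\dagger\in\mathbb{R}^p$ blockwise by $u^\dagger_{J_t}=(\widehat{u}_{\min})_{J_t}$ if $x^\star_{G_t}=0$, and $u^\dagger_{J_t}=x^\star_{G_t}/\|x^\star_{G_t}\|$ if $x^\star_{G_t}\neq 0$. Then $L^\top u^\dagger=\beta^\star$. Moreover, for every $t\in\{1,\dots,N\}$, if $\|u^\dagger_{J_t}\|<1$ then $x^\star_{G_t}=0$.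
   Context: Let $n,N\in\mathbb{N}$ and let $G_1,\dots,G_N\subseteq\{1,\dots,n\}$ be nonempty groups, possibly overlapping, with $\bigcup_i G_i=\{1,\dots,n\}$, and weights $w_1,\dots,w_N>0$. For $x\in\mathbb{R}^n$ and $G\subseteq\{1,\dots,n\}$, $x_G\in\mathbb{R}^{|G|}$ is the subvector of entries indexed by $G$ (increasing order). Let $p=\sum_i|G_i|$ and partition $\{1,\dots,p\}$ into consecutive blocks $J_i=\{\sum_{j<i}|G_j|+1,\dots,\sum_{j\le i}|G_j|\}$, $i=1,\dots,N$. The lifting operator $L\in\mathbb{R}^{p\times n}$ is defined by $(Lx)_{J_i}=w_ix_{G_i}$. For $z\in\mathbb{R}^p$, $\|z\|_{1,2}=\sum_{i=1}^N\|z_{J_i}\|$ (Euclidean norms), so $\|Lx\|_{1,2}=\sum_i w_i\|x_{G_i}\|$. For a point $x\in\mathbb{R}^n$: $\mathcal{I}_x=\{t:\ x_{G_t}\neq 0\}$; $\mathcal{E}_x=\{1,\dots,n\}\setminus\bigcup_{t\notin\mathcal{I}_x}G_t$ and $T_x=\{x'\in\mathbb{R}^n:\mathrm{supp}(x')\subseteq\mathcal{E}_x\}$; $\mathcal{E}_z=\bigcup_{t\in\mathcal{I}_x}J_t$ and $T_z=\{z'\in\mathbb{R}^p:\mathrm{supp}(z')\subseteq\mathcal{E}_z\}$. $P_T$ denotes the orthogonal projection onto a coordinate subspace $T$ (which zeroes the coordinates outside the corresponding index set) and $T^\perp$ its orthogonal complement. The effective lifting operator associated with $x$ is $\widehat{L}=L-P_{T_z}LP_{T_x^\perp}$;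 here $\widehat{L}^\top\widehat{L}$ is invertible. *)

theory Defs
  imports "HOL-Analysis.Analysis"
begin

text \<open>Coordinates of R^n are indexed by a finite type 'n, group indices by a finite
type 'g (so N = CARD('g)).  The lifted space R^p, p = sum_t |G_t|, is represented by
functions on index pairs (t, j) with j \<in> G t; the block J_t is {(t, j). j \<in> G t}.
Values at pairs (t, j) with j \<notin> G t are irrelevant (kept 0 by all operators).\<close>

definition lift :: "('g \<Rightarrow> 'n set) \<Rightarrow> ('g \<Rightarrow> real) \<Rightarrow> real^'n \<Rightarrow> ('g \<times> 'n \<Rightarrow> real)" where
  "lift G w x = (\<lambda>(t, j). if j \<in> G t then w t * x $ j else 0)"

definition lift_adj :: "('g::finite \<Rightarrow> 'n set) \<Rightarrow> ('g \<Rightarrow> real) \<Rightarrow> ('g \<times> 'n \<Rightarrow> real) \<Rightarrow> real^'n" where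
  "lift_adj G w z = (\<chi> j. \<Sum>t | j \<in> G t. w t * z (t, j))"

definition block_norm :: "('g \<Rightarrow> 'n::finite set) \<Rightarrow> ('g \<times> 'n \<Rightarrow> real) \<Rightarrow> 'g \<Rightarrow> real" where
  "block_norm G z t = sqrt (\<Sum>j\<in>G t. (z (t, j))\<^sup>2)"

definition sub_norm :: "real^'n \<Rightarrow> 'n set \<Rightarrow> real" where
  "sub_norm x S = sqrt (\<Sum>j\<in>S. (x $ j)\<^sup>2)"

definition norm12 :: "('g::finite \<Rightarrow> 'n::finite set) \<Rightarrow> ('g \<times> 'n \<Rightarrow> real) \<Rightarrow> real" where
  "norm12 G z = (\<Sum>t\<in>UNIV. block_norm G z t)"

definition objective ::
  "real^'n^'m \<Rightarrow> real^'m \<Rightarrow> real \<Rightarrow> ('g::finite \<Rightarrow> 'n::finite set) \<Rightarrow> ('g \<Rightarrow> real) \<Rightarrow> real^'n \<Rightarrow> real" where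
  "objective A y lam G w x = 1 / (2 * lam) * (norm (A *v x - y))\<^sup>2 + norm12 G (lift G w x)"

definition active_groups :: "('g \<Rightarrow> 'n set) \<Rightarrow> real^'n \<Rightarrow> 'g set" where
  "active_groups G x = {t. \<exists>j\<in>G t. x $ j \<noteq> 0}"

definition Ex :: "('g \<Rightarrow> 'n set) \<Rightarrow> real^'n \<Rightarrow> 'n set" where
  "Ex G x = UNIV - (\<Union>t\<in>- active_groups G x. G t)"

definition Ez :: "('g \<Rightarrow> 'n set) \<Rightarrow> real^'n \<Rightarrow> ('g \<times> 'n) set" where
  "Ez G x = {(t, j). t \<in> active_groups G x \<and> j \<in> G t}"

text \<open>Orthogonal projection onto T_x^perp (zeroes the coordinates in E_x).\<close>
definition proj_Tx_perp :: "('g \<Rightarrow> 'n set) \<Rightarrow> real^'n \<Rightarrow> real^'n \<Rightarrow> real^'n" where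
  "proj_Tx_perp G x v = (\<chi> j. if j \<in> Ex G x then 0 else v $ j)"

text \<open>Orthogonal projection onto T_z (zeroes the coordinates outside E_z).\<close>
definition proj_Tz :: "('g \<Rightarrow> 'n set) \<Rightarrow> real^'n \<Rightarrow> ('g \<times> 'n \<Rightarrow> real) \<Rightarrow> ('g \<times> 'n \<Rightarrow> real)" where
  "proj_Tz G x z = (\<lambda>k. if k \<in> Ez G x then z k else 0)"

definition eff_lift :: "('g \<Rightarrow> 'n set) \<Rightarrow> ('g \<Rightarrow> real) \<Rightarrow> real^'n \<Rightarrow> real^'n \<Rightarrow> ('g \<times> 'n \<Rightarrow> real)" where
  "eff_lift G w x v = (\<lambda>k. lift G w v k - proj_Tz G x (lift G w (proj_Tx_perp G x v)) k)"

text \<open>Its transpose Lhat^T = L^T - P_{T_x^perp} L^T P_{T_z} (projections are symmetric).\<close>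
definition eff_lift_adj :: "('g::finite \<Rightarrow> 'n set) \<Rightarrow> ('g \<Rightarrow> real) \<Rightarrow> real^'n \<Rightarrow> ('g \<times> 'n \<Rightarrow> real) \<Rightarrow> real^'n" where
  "eff_lift_adj G w x z = lift_adj G w z - proj_Tx_perp G x (lift_adj G w (proj_Tz G x z))"

definition u_hat_min :: "('g::finite \<Rightarrow> 'n::finite set) \<Rightarrow> ('g \<Rightarrow> real) \<Rightarrow> real^'n \<Rightarrow> real^'n \<Rightarrow> ('g \<times> 'n \<Rightarrow> real)" where
  "u_hat_min G w x beta =
     eff_lift G w x (matrix_inv (matrix (\<lambda>v. eff_lift_adj G w x (eff_lift G w x v))) *v beta)"

definition ogn_cert :: "('g::finite \<Rightarrow> 'n::finite set) \<Rightarrow> ('g \<Rightarrow> real) \<Rightarrow> real^'n \<Rightarrow> real^'n \<Rightarrow> ('g \<times> 'n \<Rightarrow> real)" where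
  "ogn_cert G w x beta = (\<lambda>(t, j).
     if j \<notin> G t then 0
     else if (\<forall>i\<in>G t. x $ i = 0) then u_hat_min G w x beta (t, j)
     else x $ j / sub_norm x (G t))"

end

theory Submission
  imports Defs
begin

text \<open>For j \<in> E_x every group containing j is active, so the objective is differentiable
along the j-th coordinate at a minimizer and stationarity gives beta_j as the j-th entry of
L^T applied to the normalized active blocks; this is where the certificate is x_G/|x_G|.
For j \<notin> E_x we have x_j = 0, so only the inactive blocks of the certificate contribute to
(L^T u)_j, and on those Lhat and L agree.  Lhat^T Lhat is diagonal with entries the sums of
w_t^2 over the groups that Lhat keeps at j, which are positive because the groups cover all
coordinates; hence Lhat^T uhat_min = beta.  Finally the active blocks of the certificate are
unit vectors, so a block of norm below 1 is inactive.\<close>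

lemma invertible_matrix_inv_right:
  fixes A :: "'a::semiring_1^'n^'n"
  assumes "invertible A"
  shows "A ** matrix_inv A = mat 1"
  using assms unfolding invertible_def matrix_inv_def by (rule someI_ex[THEN conjunct1])

lemma linear_inj_apply_matrix_inv:
  fixes f :: "real^'n \<Rightarrow> real^'n"
  assumes "linear f" and "inj f"
  shows "f (matrix_inv (matrix f) *v b) = b"
proof -
  have "invertible (matrix f)"
    using assms by (simp add: invertible_left_inverse matrix_left_invertible_injective)
  then have "matrix f *v (matrix_inv (matrix f) *v b) = b"
    by (simp add: matrix_vector_mul_assoc invertible_matrix_inv_right)
  then show ?thesis
    using \<open>linear f\<close> by (simp add: matrix_works linear_matrix_vector_mul_eq)
qed

lemma sub_norm_pos_iff: "0 < sub_norm x S \<longleftrightarrow> (\<exists>j\<in>S. x $ j \<noteq> 0)"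
proof -
  have "0 < (\<Sum>j\<in>S. (x $ j)\<^sup>2) \<longleftrightarrow> (\<exists>j\<in>S. x $ j \<noteq> 0)"
    by (auto simp: less_le sum_nonneg sum_nonneg_eq_0_iff)
  then show ?thesis by (simp add: sub_norm_def)
qed

lemma sub_norm_add_axis_notin:
  assumes "j \<notin> S"
  shows "sub_norm (x + s *\<^sub>R axis j 1) S = sub_norm x S"
  using assms unfolding sub_norm_def by (intro sum.cong arg_cong[where f = sqrt]) (auto simp: axis_def)

lemma has_real_derivative_sub_norm_axis:
  assumes "j \<in> S" and "0 < sub_norm x S"
  shows "((\<lambda>s. sub_norm (x + s *\<^sub>R axis j 1) S) has_real_derivative x $ j / sub_norm x S) (at 0)"
proof -
  have sq: "((\<lambda>s. \<Sum>i\<in>S. ((x + s *\<^sub>R axis j 1) $ i)\<^sup>2) has_real_derivative 2 * x $ j) (at 0)"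
  proof -
    have "((\<lambda>s. \<Sum>i\<in>S. ((x + s *\<^sub>R axis j 1) $ i)\<^sup>2) has_real_derivative
        (\<Sum>i\<in>S. 2 * x $ i * axis j 1 $ i)) (at 0)"
      by (rule derivative_eq_intros refl | simp add: algebra_simps)+
    moreover have "(\<Sum>i\<in>S. 2 * x $ i * axis j 1 $ i) = 2 * x $ j"
      using assms(1) by (simp add: axis_def if_distrib[of "\<lambda>a. _ * a"] cong: if_cong)
    ultimately show ?thesis by simp
  qed
  have "0 < (\<Sum>i\<in>S. ((x + 0 *\<^sub>R axis j 1) $ i)\<^sup>2)"
    using assms(2) by (simp add: sub_norm_def)
  from DERIV_chain2[OF DERIV_real_sqrt[OF this] sq] assms(2) show ?thesis
    by (simp add: sub_norm_def field_simps)
qed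

lemma has_real_derivative_power2_norm_line:
  fixes r a :: "'a::real_inner"
  shows "((\<lambda>s. (norm (r + s *\<^sub>R a))\<^sup>2) has_real_derivative 2 * (r \<bullet> a)) (at 0)"
proof -
  have "(norm (r + s *\<^sub>R a))\<^sup>2 = r \<bullet> r + 2 * s * (r \<bullet> a) + s\<^sup>2 * (a \<bullet> a)" for s
    unfolding power2_norm_eq_inner
    by (simp add: inner_add_left inner_add_right inner_commute power2_eq_square algebra_simps)
  then show ?thesis
    by (simp only:) (rule derivative_eq_intros refl | simp)+
qed

lemma block_norm_lift: "block_norm G (lift G w x) t = \<bar>w t\<bar> * sub_norm x (G t)"
proof -
  have "(\<Sum>j\<in>G t. (lift G w x (t, j))\<^sup>2) = (w t)\<^sup>2 * (\<Sum>j\<in>G t. (x $ j)\<^sup>2)"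
    by (simp add: lift_def sum_distrib_left power_mult_distrib)
  then show ?thesis by (simp add: block_norm_def sub_norm_def real_sqrt_mult)
qed

lemma minimizer_stationary_on_Ex:
  fixes A :: "real^'n::finite^'m::finite" and G :: "'g::finite \<Rightarrow> 'n set"
  assumes "lam > 0" and "\<forall>t. w t > 0"
    and "\<forall>x. objective A y lam G w xs \<le> objective A y lam G w x"
    and "j \<in> Ex G xs"
  shows "(- (1 / lam) *\<^sub>R (transpose A *v (A *v xs - y))) $ j =
    (\<Sum>t | j \<in> G t. w t * (xs $ j / sub_norm xs (G t)))"
proof -
  define e :: "real^'n" where "e = axis j 1"
  define r where "r = A *v xs - y"
  define d where "d t = (if j \<in> G t then w t * (xs $ j / sub_norm xs (G t)) else 0)" for t
  have line: "objective A y lam G w (xs + s *\<^sub>R e) =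
      1 / (2 * lam) * (norm (r + s *\<^sub>R (A *v e)))\<^sup>2 + (\<Sum>t\<in>UNIV. w t * sub_norm (xs + s *\<^sub>R e) (G t))"
    for s
    using assms(2)
    by (simp add: abs_of_pos objective_def norm12_def block_norm_lift r_def matrix_vector_right_distrib
        matrix_vector_mult_scaleR algebra_simps)
  have group: "((\<lambda>s. w t * sub_norm (xs + s *\<^sub>R e) (G t)) has_real_derivative d t) (at 0)" for t
  proof (cases "j \<in> G t")
    case True
    with assms(4) have "0 < sub_norm xs (G t)"
      by (auto simp: Ex_def active_groups_def sub_norm_pos_iff)
    from DERIV_cmult[OF has_real_derivative_sub_norm_axis[OF True this]] show ?thesis
      using True by (simp add: d_def e_def)
  next
    case False
    then show ?thesis by (simp add: d_def e_def sub_norm_add_axis_notin)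
  qed
  have "((\<lambda>s. objective A y lam G w (xs + s *\<^sub>R e)) has_real_derivative
      1 / (2 * lam) * (2 * (r \<bullet> (A *v e))) + (\<Sum>t\<in>UNIV. d t)) (at 0)"
    unfolding line by (intro DERIV_add DERIV_cmult DERIV_sum has_real_derivative_power2_norm_line group)
  then have "1 / (2 * lam) * (2 * (r \<bullet> (A *v e))) + (\<Sum>t\<in>UNIV. d t) = 0"
    using assms(3) by (intro DERIV_local_min[of _ _ _ 1]) auto
  moreover have "r \<bullet> (A *v e) = (transpose A *v r) $ j"
    by (simp add: e_def dot_lmul_matrix[symmetric] inner_axis)
  moreover have "(\<Sum>t\<in>UNIV. d t) = (\<Sum>t | j \<in> G t. w t * (xs $ j / sub_norm xs (G t)))"
    by (simp add: d_def sum.If_cases Int_def)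
  ultimately show ?thesis
    using assms(1) by (simp add: r_def field_simps)
qed

definition eff_groups :: "('g \<Rightarrow> 'n set) \<Rightarrow> real^'n \<Rightarrow> 'n \<Rightarrow> 'g set" where
  "eff_groups G x j = {t. j \<in> G t \<and> (j \<in> Ex G x \<or> t \<notin> active_groups G x)}"

lemma eff_lift_apply:
  assumes "j \<in> G t"
  shows "eff_lift G w x v (t, j) = (if t \<in> eff_groups G x j then w t * v $ j else 0)"
  using assms by (auto simp: eff_lift_def lift_def proj_Tz_def proj_Tx_perp_def Ez_def eff_groups_def)

lemma eff_lift_adj_apply:
  "eff_lift_adj G w x z $ j = (\<Sum>t\<in>eff_groups G x j. w t * z (t, j))"
proof (cases "j \<in> Ex G x")
  case True
  then show ?thesis
    by (simp add: eff_lift_adj_def lift_adj_def proj_Tx_perp_def eff_groups_def)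
next
  case False
  have "eff_lift_adj G w x z $ j =
      (\<Sum>t | j \<in> G t. w t * z (t, j)) -
      (\<Sum>t | j \<in> G t. if t \<in> active_groups G x then w t * z (t, j) else 0)"
    using False
    by (simp add: eff_lift_adj_def lift_adj_def proj_Tx_perp_def proj_Tz_def Ez_def if_distrib)
  also have "\<dots> = (\<Sum>t | j \<in> G t. if t \<notin> active_groups G x then w t * z (t, j) else 0)"
    by (auto simp: sum_subtractf[symmetric] intro!: sum.cong)
  also have "\<dots> = (\<Sum>t\<in>eff_groups G x j. w t * z (t, j))"
    using False by (simp add: sum.If_cases Int_def eff_groups_def)
  finally show ?thesis .
qed

lemma eff_gram_apply:
  "eff_lift_adj G w x (eff_lift G w x v) = (\<chi> j. (\<Sum>t\<in>eff_groups G x j. (w t)\<^sup>2) * v $ j)"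
proof -
  have "eff_lift G w x v (t, j) = w t * v $ j" if "t \<in> eff_groups G x j" for t j
    using that eff_lift_apply[of j G t] by (simp add: eff_groups_def)
  then show ?thesis
    by (simp add: vec_eq_iff eff_lift_adj_apply sum_distrib_right power2_eq_square mult.assoc)
qed

lemma eff_groups_nonempty:
  assumes "(\<Union>t. G t) = UNIV"
  shows "eff_groups G x j \<noteq> {}"
proof (cases "j \<in> Ex G x")
  case True
  obtain t where "j \<in> G t" using assms by blast
  with True show ?thesis by (auto simp: eff_groups_def)
next
  case False
  then show ?thesis by (auto simp: eff_groups_def Ex_def)
qed

lemma eff_lift_adj_u_hat_min:
  assumes "(\<Union>t. G t) = UNIV" and "\<forall>t. w t \<noteq> 0"
  shows "eff_lift_adj G w x (u_hat_min G w x beta) = beta"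
proof -
  define c where "c j = (\<Sum>t\<in>eff_groups G x j. (w t)\<^sup>2)" for j
  have "c j \<noteq> 0" for j
    unfolding c_def using assms eff_groups_nonempty[OF assms(1)]
    by (intro sum_pos[THEN less_imp_neq, symmetric]) auto
  then have "inj (\<lambda>v. \<chi> j. c j * v $ j)"
    by (intro injI) (simp add: vec_eq_iff)
  moreover have "linear (\<lambda>v. \<chi> j. c j * v $ j)"
    by (intro linearI) (simp_all add: vec_eq_iff algebra_simps)
  ultimately show ?thesis
    using linear_inj_apply_matrix_inv[of "\<lambda>v. \<chi> j. c j * v $ j"]
    by (simp add: u_hat_min_def eff_gram_apply c_def)
qed

lemma lift_adj_ogn_cert:
  "lift_adj G w (ogn_cert G w x beta) $ j =
    (if j \<in> Ex G x then (\<Sum>t | j \<in> G t. w t * (x $ j / sub_norm x (G t)))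
     else eff_lift_adj G w x (u_hat_min G w x beta) $ j)"
proof (cases "j \<in> Ex G x")
  case True
  then have "ogn_cert G w x beta (t, j) = x $ j / sub_norm x (G t)" if "j \<in> G t" for t
    using that by (auto simp: ogn_cert_def Ex_def active_groups_def)
  with True show ?thesis
    by (simp add: lift_adj_def)
next
  case False
  then have "x $ j = 0"
    by (auto simp: Ex_def active_groups_def)
  then have "lift_adj G w (ogn_cert G w x beta) $ j =
      (\<Sum>t | j \<in> G t. if t \<notin> active_groups G x then w t * u_hat_min G w x beta (t, j) else 0)"
    by (auto simp: lift_adj_def ogn_cert_def active_groups_def intro!: sum.cong)
  also have "\<dots> = eff_lift_adj G w x (u_hat_min G w x beta) $ j"
    using False by (simp add: eff_lift_adj_apply eff_groups_def sum.If_cases Int_def)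
  finally show ?thesis
    using False by simp
qed

lemma block_norm_ogn_cert_active:
  assumes "t \<in> active_groups G x"
  shows "block_norm G (ogn_cert G w x beta) t = 1"
proof -
  have pos: "0 < sub_norm x (G t)"
    using assms by (simp add: active_groups_def sub_norm_pos_iff)
  have "(\<Sum>j\<in>G t. (ogn_cert G w x beta (t, j))\<^sup>2) = (\<Sum>j\<in>G t. (x $ j)\<^sup>2) / (sub_norm x (G t))\<^sup>2"
    using assms
    by (auto simp: ogn_cert_def active_groups_def power_divide sum_divide_distrib intro!: sum.cong)
  also have "\<dots> = 1"
    using pos by (simp add: sub_norm_def sum_nonneg)
  finally show ?thesis
    by (simp add: block_norm_def)
qed

theorem proposition3p6:
  fixes A :: "real^'n::finite^'m::finite" and y :: "real^'m" and lam :: real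
    and G :: "'g::finite \<Rightarrow> 'n set" and w :: "'g \<Rightarrow> real" and xs :: "real^'n"
  assumes "lam > 0"
    and "\<forall>t. G t \<noteq> {}"
    and "(\<Union>t. G t) = UNIV"
    and "\<forall>t. w t > 0"
    and "\<forall>x. objective A y lam G w xs \<le> objective A y lam G w x"
  defines "beta \<equiv> - (1 / lam) *\<^sub>R (transpose A *v (A *v xs - y))"
  shows "lift_adj G w (ogn_cert G w xs beta) = beta \<and>
         (\<forall>t. block_norm G (ogn_cert G w xs beta) t < 1 \<longrightarrow> (\<forall>j\<in>G t. xs $ j = 0))"
proof -
  let ?u = "ogn_cert G w xs beta"
  have "\<forall>t. w t \<noteq> 0"
    using assms(4) by (metis less_irrefl)
  then have uhat: "eff_lift_adj G w xs (u_hat_min G w xs beta) = beta"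
    by (rule eff_lift_adj_u_hat_min[OF assms(3)])
  have "lift_adj G w ?u $ j = beta $ j" for j
    using minimizer_stationary_on_Ex[OF assms(1,4,5)] uhat
    by (simp add: lift_adj_ogn_cert beta_def)
  moreover have "\<forall>j\<in>G t. xs $ j = 0" if "block_norm G ?u t < 1" for t
    using that block_norm_ogn_cert_active[of t G xs w beta] unfolding active_groups_def by fastforce
  ultimately show ?thesis
    by (simp add: vec_eq_iff)
qed

end
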